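(* Let $\mathcal S$ be a trajectory set with $\mathcal M_0\neq\emptyset$. Then $\bar\sigma(0)\ge0$, and for every financial position $f:\mathcal S\to[-\infty,+\infty]$, $$\sup_{Q\in\mathcal M_0}E_Q^*[f]\le\bar\sigma(f)\le\|f\|.$$ Moreover, for every $Q\in\mathcal M_0$ one has $\mathcal L^1_{(K)}\subseteq\mathcal L^1(\mathcal S,\bar{\mathfrak A}_Q,Q)$ and $\int_{(K)}f=E_Q[f]$ for every $f\in\mathcal L^1_{(K)}$.
   Context: Fix $s_0\in\mathbb R$. A trajectory set is any set $\mathcal S$ of real sequences $S=(S_j)_{j\in\mathbb N_0}$ with $S_0=s_0$. A simple portfolio $(V,n,H)$ consists of $V\in\mathbb R$, $n\in\mathbb N$ and nonanticipating $H_i:\mathcal S\to\mathbb R$, $0\le i\le n-1$ (i.e. $H_i(S)=h_i(S_0,\dots,S_i)$ for arbitrary, not necessarily measurable, $h_i:\mathbb R^{i+1}\to\mathbb R$), with wealth $\Pi^{V,n,H}_j(S)=V+\sum_{i=0}^{\min\{j,n\}-1}H_i(S)(S_{i+1}-S_i)$ and $\Pi^{V,n,H}_\infty:=\Pi^{V,n,H}_n$; positive if $V\ge0$ and $\Pi^{V,n,H}_\infty\ge0$ on $\mathcal S$. A generalized portfolio is a sequence $(V_m,n_m,H_m)_{m\in\mathbb N_0}$ of simple portfolios, positive for $m\ge1$; positive generalized if moreover $\Pi^{V_0,n_0,H_0}_j\equiv0$ for all $j$. It superhedges $f:\mathcal S\to[-\infty,+\infty]$ with initial endowment $\sum_{m=0}^\infty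 V_m$ if $f\le\sum_{m=0}^\infty\Pi^{V_m,n_m,H_m}_\infty$ on $\mathcal S$. For $f\ge0$, $\bar I(f)$ is the infimum of initial endowments of positive generalized portfolios superhedging $f$; $\bar\sigma(f)$ is the infimum of initial endowments of generalized portfolios superhedging $f$; $\|f\|:=\bar I(|f|)$. Let $\mathcal L^1_{(K)}$ be the set of real-valued $f$ with $-\bar\sigma(-f)=\bar\sigma(f)\in\mathbb R$, and $\int_{(K)}f:=\bar\sigma(f)$ for such $f$. Let $\mathfrak A$ be the trace on $\mathcal S$ of the product Borel $\sigma$-field of $\mathbb R^{\mathbb N_0}$, $T_i(S)=S_i$ the coordinate process, and $\mathcal F_i=\sigma(T_0,\dots,T_i)$. A martingale measure is a probability $Q$ on $(\mathcal S,\mathfrak A)$ under which $(T_i)_{i\ge0}$ is a martingale w.r.t. $(\mathcal F_i)$. It has finite support at finite maturities if there is $\mathcal S'\in\mathfrak A$ with $Q(\mathcal S')=1$ such that for every $j\in\mathbb N_0$ the set of nodes $\{\mathcal S_{(S,j)}:S\in\mathcal S'\}$ is finite, where $\mathcal S_{(S,j)}=\{\tilde S\in\mathcal S:(\tilde S_0,\dots,\tilde S_j)=(S_0,\dots,S_j)\}$. $\mathcal M_0$ is the set of such martingale measures. $\bar{\mathfrak A}_Q$ is the $Q$-completion of $\mathfrak A$, $E_Q$ the expectation, and $E_Q^*[f]=\inf\{E_Q[h]: h\ \bar{\mathfrak A}_Q\text{-measurable},\ f\le h\text{ on }\mathcal S,\ E_Q[h]\text{ exists in }[-\infty,+\infty]\}$.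 *)

theory Defs
  imports "HOL-Probability.Probability"
begin

type_synonym traj = "nat \<Rightarrow> real"

definition wealth :: "real \<Rightarrow> nat \<Rightarrow> (nat \<Rightarrow> traj \<Rightarrow> real) \<Rightarrow> nat \<Rightarrow> traj \<Rightarrow> real" where
  "wealth V n H j S = V + (\<Sum>i<min j n. H i S * (S (Suc i) - S i))"

definition wealth_inf :: "real \<Rightarrow> nat \<Rightarrow> (nat \<Rightarrow> traj \<Rightarrow> real) \<Rightarrow> traj \<Rightarrow> real" where
  "wealth_inf V n H S = wealth V n H n S"

definition nonanticipating :: "traj set \<Rightarrow> nat \<Rightarrow> (nat \<Rightarrow> traj \<Rightarrow> real) \<Rightarrow> bool" where
  "nonanticipating TS n H \<longleftrightarrow>
     (\<forall>i<n. \<forall>S\<in>TS. \<forall>S'\<in>TS. (\<forall>k\<le>i. S k = S' k) \<longrightarrow> H i S = H i S')"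

definition simple_portfolio :: "traj set \<Rightarrow> real \<Rightarrow> nat \<Rightarrow> (nat \<Rightarrow> traj \<Rightarrow> real) \<Rightarrow> bool" where
  "simple_portfolio TS V n H \<longleftrightarrow> n \<ge> 1 \<and> nonanticipating TS n H"

definition positive_sp :: "traj set \<Rightarrow> real \<Rightarrow> nat \<Rightarrow> (nat \<Rightarrow> traj \<Rightarrow> real) \<Rightarrow> bool" where
  "positive_sp TS V n H \<longleftrightarrow> V \<ge> 0 \<and> (\<forall>S\<in>TS. wealth_inf V n H S \<ge> 0)"

definition gen_portfolio ::
  "traj set \<Rightarrow> (nat \<Rightarrow> real) \<Rightarrow> (nat \<Rightarrow> nat) \<Rightarrow> (nat \<Rightarrow> nat \<Rightarrow> traj \<Rightarrow> real) \<Rightarrow> bool" where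
  "gen_portfolio TS V N H \<longleftrightarrow>
     (\<forall>m. simple_portfolio TS (V m) (N m) (H m)) \<and>
     (\<forall>m\<ge>1. positive_sp TS (V m) (N m) (H m))"

definition pos_gen_portfolio ::
  "traj set \<Rightarrow> (nat \<Rightarrow> real) \<Rightarrow> (nat \<Rightarrow> nat) \<Rightarrow> (nat \<Rightarrow> nat \<Rightarrow> traj \<Rightarrow> real) \<Rightarrow> bool" where
  "pos_gen_portfolio TS V N H \<longleftrightarrow> gen_portfolio TS V N H \<and>
     (\<forall>j. \<forall>S\<in>TS. wealth (V 0) (N 0) (H 0) j S = 0)"

text \<open>Terminal value of a generalized portfolio; the terms for m \<ge> 1 are nonnegative on TS.\<close>
definition gp_value ::
  "(nat \<Rightarrow> real) \<Rightarrow> (nat \<Rightarrow> nat) \<Rightarrow> (nat \<Rightarrow> nat \<Rightarrow> traj \<Rightarrow> real) \<Rightarrow> traj \<Rightarrow> ereal" where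
  "gp_value V N H S = ereal (wealth_inf (V 0) (N 0) (H 0) S)
      + (\<Sum>m. ereal (wealth_inf (V (Suc m)) (N (Suc m)) (H (Suc m)) S))"

definition endowment :: "(nat \<Rightarrow> real) \<Rightarrow> ereal" where
  "endowment V = ereal (V 0) + (\<Sum>m. ereal (V (Suc m)))"

definition superhedges ::
  "traj set \<Rightarrow> (nat \<Rightarrow> real) \<Rightarrow> (nat \<Rightarrow> nat) \<Rightarrow> (nat \<Rightarrow> nat \<Rightarrow> traj \<Rightarrow> real) \<Rightarrow> (traj \<Rightarrow> ereal) \<Rightarrow> bool" where
  "superhedges TS V N H f \<longleftrightarrow> (\<forall>S\<in>TS. f S \<le> gp_value V N H S)"

definition sigma_bar :: "traj set \<Rightarrow> (traj \<Rightarrow> ereal) \<Rightarrow> ereal" where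
  "sigma_bar TS f = Inf {endowment V | V N H. gen_portfolio TS V N H \<and> superhedges TS V N H f}"

definition I_bar :: "traj set \<Rightarrow> (traj \<Rightarrow> ereal) \<Rightarrow> ereal" where
  "I_bar TS f = Inf {endowment V | V N H. pos_gen_portfolio TS V N H \<and> superhedges TS V N H f}"

definition normK :: "traj set \<Rightarrow> (traj \<Rightarrow> ereal) \<Rightarrow> ereal" where
  "normK TS f = I_bar TS (\<lambda>S. \<bar>f S\<bar>)"

definition L1K :: "traj set \<Rightarrow> (traj \<Rightarrow> real) set" where
  "L1K TS = {f. - sigma_bar TS (\<lambda>S. - ereal (f S)) = sigma_bar TS (\<lambda>S. ereal (f S))
                \<and> \<bar>sigma_bar TS (\<lambda>S. ereal (f S))\<bar> \<noteq> \<infinity>}"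

definition intK :: "traj set \<Rightarrow> (traj \<Rightarrow> real) \<Rightarrow> ereal" where
  "intK TS f = sigma_bar TS (\<lambda>S. ereal (f S))"

definition A_meas :: "traj set \<Rightarrow> traj measure" where
  "A_meas TS = restrict_space (Pi\<^sub>M UNIV (\<lambda>_::nat. (borel :: real measure))) TS"

definition filtr :: "traj set \<Rightarrow> nat \<Rightarrow> traj set set" where
  "filtr TS i = sigma_sets TS {{S\<in>TS. S k \<in> B} | k B. k \<le> i \<and> B \<in> sets (borel :: real measure)}"

definition martingale_measure :: "traj set \<Rightarrow> traj measure \<Rightarrow> bool" where
  "martingale_measure TS Q \<longleftrightarrow> prob_space Q \<and> sets Q = sets (A_meas TS) \<and> space Q = TS \<and>
     (\<forall>i. integrable Q (\<lambda>S. S i)) \<and>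
     (\<forall>i. \<forall>A\<in>filtr TS i. (\<integral>S. indicator A S * S (Suc i) \<partial>Q) = (\<integral>S. indicator A S * S i \<partial>Q))"

definition node :: "traj set \<Rightarrow> traj \<Rightarrow> nat \<Rightarrow> traj set" where
  "node TS S j = {S'\<in>TS. \<forall>k\<le>j. S' k = S k}"

definition finite_support :: "traj set \<Rightarrow> traj measure \<Rightarrow> bool" where
  "finite_support TS Q \<longleftrightarrow> (\<exists>TS'\<in>sets Q. emeasure Q TS' = 1 \<and>
      (\<forall>j. finite ((\<lambda>S. node TS S j) ` TS')))"

definition M0 :: "traj set \<Rightarrow> traj measure set" where
  "M0 TS = {Q. martingale_measure TS Q \<and> finite_support TS Q}"

definition Epos :: "'a measure \<Rightarrow> ('a \<Rightarrow> ereal) \<Rightarrow> ennreal" where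
  "Epos M h = (\<integral>\<^sup>+x. e2ennreal (max 0 (h x)) \<partial>M)"

definition Eneg :: "'a measure \<Rightarrow> ('a \<Rightarrow> ereal) \<Rightarrow> ennreal" where
  "Eneg M h = (\<integral>\<^sup>+x. e2ennreal (max 0 (- h x)) \<partial>M)"

definition E_exists :: "'a measure \<Rightarrow> ('a \<Rightarrow> ereal) \<Rightarrow> bool" where
  "E_exists M h \<longleftrightarrow> Epos M h \<noteq> \<infinity> \<or> Eneg M h \<noteq> \<infinity>"

definition E_ext :: "'a measure \<Rightarrow> ('a \<Rightarrow> ereal) \<Rightarrow> ereal" where
  "E_ext M h = enn2ereal (Epos M h) - enn2ereal (Eneg M h)"

definition outer_exp :: "traj set \<Rightarrow> traj measure \<Rightarrow> (traj \<Rightarrow> ereal) \<Rightarrow> ereal" where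
  "outer_exp TS Q f = Inf {E_ext (completion Q) h | h.
      h \<in> borel_measurable (completion Q) \<and> (\<forall>S\<in>TS. f S \<le> h S) \<and> E_exists (completion Q) h}"

end

theory Submission
  imports Defs
begin

text \<open>
  Fix Q in M0 and a Q-full set of trajectories meeting only finitely many nodes at each time.
  On it the i-th trading gain of a simple portfolio is a finite combination of martingale
  increments over time-i nodes, so terminal wealth agrees Q-a.s. with an integrable function of
  mean V. The positive parts of a generalized portfolio add up by monotone convergence, so every
  superhedge of f yields a measurable majorant of f whose extended expectation is the initial
  endowment; this bounds the outer expectation by the superhedging price. For f in L1_(K) with
  price c, applying this to f and -f gives measurable g \<ge> f and k \<ge> -f with E g \<le> c and
  E k \<le> -c; since g + k \<ge> 0 this forces f = g a.s., so f is integrable in the completion of Q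
  with integral c.
\<close>

section \<open>Extended expectations\<close>

lemma E_ext_cong_AE:
  assumes "AE x in M. g x = h x"
  shows "E_ext M g = E_ext M h" and "E_exists M g = E_exists M h"
proof -
  have "Epos M g = Epos M h" "Eneg M g = Eneg M h"
    unfolding Epos_def Eneg_def using assms
    by (auto intro!: nn_integral_cong_AE elim!: eventually_mono)
  then show "E_ext M g = E_ext M h" "E_exists M g = E_exists M h"
    unfolding E_ext_def E_exists_def by simp_all
qed

lemma E_ext_completion: "E_ext (completion M) h = E_ext M h"
  and E_exists_completion: "E_exists (completion M) h = E_exists M h"
  unfolding E_ext_def E_exists_def Epos_def Eneg_def nn_integral_completion by simp_all

lemma Epos_mono: "(\<And>x. x \<in> space M \<Longrightarrow> g x \<le> h x) \<Longrightarrow> Epos M g \<le> Epos M h"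
  unfolding Epos_def by (intro nn_integral_mono e2ennreal_mono max.mono order.refl)

lemma Eneg_le_Epos: "(\<And>x. x \<in> space M \<Longrightarrow> - g x \<le> h x) \<Longrightarrow> Eneg M g \<le> Epos M h"
  unfolding Epos_def Eneg_def by (intro nn_integral_mono e2ennreal_mono max.mono order.refl)

lemma E_ext_mono:
  assumes "\<And>x. x \<in> space M \<Longrightarrow> g x \<le> h x"
  shows "E_ext M g \<le> E_ext M h"
proof -
  have "Eneg M h \<le> Eneg M g"
    unfolding Eneg_def
    by (intro nn_integral_mono e2ennreal_mono max.mono order.refl) (simp add: assms)
  then show ?thesis
    unfolding E_ext_def using Epos_mono[of M g h] assms
    by (intro ereal_minus_mono) (simp_all add: less_eq_ennreal.rep_eq[symmetric])
qed

text \<open>In ereal, \<open>\<infinity> - x = \<infinity>\<close> even for \<open>x = \<infinity>\<close>, so an infinite positive part always makes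
  E_ext infinite.\<close>

lemma Epos_ne_top: "E_ext M h \<noteq> \<infinity> \<Longrightarrow> Epos M h \<noteq> \<infinity>"
  unfolding E_ext_def by (cases "Eneg M h" rule: ennreal_cases) auto

lemma E_ext_real:
  fixes r :: "'a \<Rightarrow> real"
  assumes "integrable M r"
  shows "E_exists M (\<lambda>x. ereal (r x))" and "E_ext M (\<lambda>x. ereal (r x)) = ereal (\<integral>x. r x \<partial>M)"
proof -
  have p: "Epos M (\<lambda>x. ereal (r x)) = (\<integral>\<^sup>+x. ennreal (r x) \<partial>M)"
    and n: "Eneg M (\<lambda>x. ereal (r x)) = (\<integral>\<^sup>+x. ennreal (- r x) \<partial>M)"
    unfolding Epos_def Eneg_def by (auto intro!: nn_integral_cong simp: max_def ennreal_neg)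
  obtain a b where a: "(\<integral>\<^sup>+x. ennreal (r x) \<partial>M) = ennreal a" "0 \<le> a"
    and b: "(\<integral>\<^sup>+x. ennreal (- r x) \<partial>M) = ennreal b" "0 \<le> b"
    using integrableD(2,3)[OF assms]
    by (metis ennreal_cases top.not_eq_extremum infinity_ennreal_def)
  show "E_exists M (\<lambda>x. ereal (r x))"
    unfolding E_exists_def p a by simp
  show "E_ext M (\<lambda>x. ereal (r x)) = ereal (\<integral>x. r x \<partial>M)"
    unfolding E_ext_def p n real_lebesgue_integral_def[OF assms] a b using a(2) b(2) by simp
qed

lemma integrable_real_of_ereal:
  fixes g :: "'a \<Rightarrow> ereal"
  assumes [measurable]: "g \<in> borel_measurable M" and p: "Epos M g \<noteq> \<infinity>" and n: "Eneg M g \<noteq> \<infinity>"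
  shows "integrable M (\<lambda>x. real_of_ereal (g x))"
    and "AE x in M. g x = ereal (real_of_ereal (g x))"
    and "E_ext M g = ereal (\<integral>x. real_of_ereal (g x) \<partial>M)"
proof -
  have "AE x in M. e2ennreal (max 0 (g x)) \<noteq> \<infinity>"
    using p unfolding Epos_def by (intro nn_integral_PInf_AE) auto
  moreover have "AE x in M. e2ennreal (max 0 (- g x)) \<noteq> \<infinity>"
    using n unfolding Eneg_def by (intro nn_integral_PInf_AE) auto
  ultimately show ae: "AE x in M. g x = ereal (real_of_ereal (g x))"
    by eventually_elim (case_tac "g x"; simp)
  have "(\<integral>\<^sup>+x. ennreal (real_of_ereal (g x)) \<partial>M) \<le> Epos M g"
    unfolding Epos_def by (intro nn_integral_mono) (case_tac "g x"; simp add: max_def ennreal_neg)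
  moreover have "(\<integral>\<^sup>+x. ennreal (- real_of_ereal (g x)) \<partial>M) \<le> Eneg M g"
    unfolding Eneg_def by (intro nn_integral_mono) (case_tac "g x"; simp add: max_def ennreal_neg)
  ultimately show int: "integrable M (\<lambda>x. real_of_ereal (g x))"
    unfolding real_integrable_def using p n
    by (auto simp: top_unique[symmetric] infinity_ennreal_def)
  show "E_ext M g = ereal (\<integral>x. real_of_ereal (g x) \<partial>M)"
    using E_ext_cong_AE(1)[OF ae] E_ext_real(2)[OF int] by simp
qed

lemma integrable_enn2real:
  fixes B :: "'a \<Rightarrow> ennreal"
  assumes [measurable]: "B \<in> borel_measurable M" and fin: "(\<integral>\<^sup>+x. B x \<partial>M) \<noteq> \<infinity>"
  shows "integrable M (\<lambda>x. enn2real (B x))" and "AE x in M. B x = ennreal (enn2real (B x))"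
    and "ereal (\<integral>x. enn2real (B x) \<partial>M) = enn2ereal (\<integral>\<^sup>+x. B x \<partial>M)"
proof -
  have "AE x in M. B x \<noteq> \<infinity>"
    using fin by (intro nn_integral_PInf_AE) auto
  then show ae_B: "AE x in M. B x = ennreal (enn2real (B x))"
    by eventually_elim (simp add: infinity_ennreal_def less_top)
  then show "integrable M (\<lambda>x. enn2real (B x))"
    using nn_integral_cong_AE[OF ae_B] fin
    by (intro integrableI_nonneg) (auto simp: less_top infinity_ennreal_def)
  show "ereal (\<integral>x. enn2real (B x) \<partial>M) = enn2ereal (\<integral>\<^sup>+x. B x \<partial>M)"
    using enn2real_nn_integral_eq_integral[where f=B and M=M and g="\<lambda>x. enn2real (B x)"] fin ae_B
    by (cases "(\<integral>\<^sup>+x. B x \<partial>M)" rule: ennreal_cases) (auto simp: infinity_ennreal_def)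
qed

lemma E_ext_add_nonneg:
  fixes r :: "'a \<Rightarrow> real" and B :: "'a \<Rightarrow> ennreal"
  assumes r: "integrable M r" and B[measurable]: "B \<in> borel_measurable M"
  shows "E_exists M (\<lambda>x. ereal (r x) + enn2ereal (B x))"
    and "E_ext M (\<lambda>x. ereal (r x) + enn2ereal (B x))
           = ereal (\<integral>x. r x \<partial>M) + enn2ereal (\<integral>\<^sup>+x. B x \<partial>M)"
proof -
  let ?g = "\<lambda>x. ereal (r x) + enn2ereal (B x)"
  have [measurable]: "r \<in> borel_measurable M"
    using r by blast
  have neg_r: "(\<integral>\<^sup>+x. ennreal (- r x) \<partial>M) \<noteq> \<infinity>"
    using r by auto
  have "Eneg M ?g \<le> (\<integral>\<^sup>+x. ennreal (- r x) \<partial>M)"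
    unfolding Eneg_def
    by (intro nn_integral_mono) (case_tac "B x" rule: ennreal_cases; auto simp: max_def ennreal_neg)
  then have neg: "Eneg M ?g \<noteq> \<infinity>"
    using neg_r by (auto simp: top_unique[symmetric] infinity_ennreal_def)
  then show "E_exists M ?g"
    unfolding E_exists_def by blast
  show "E_ext M ?g = ereal (\<integral>x. r x \<partial>M) + enn2ereal (\<integral>\<^sup>+x. B x \<partial>M)"
  proof (cases "(\<integral>\<^sup>+x. B x \<partial>M) = \<infinity>")
    case True
    have "(\<integral>\<^sup>+x. B x \<partial>M) \<le> (\<integral>\<^sup>+x. e2ennreal (max 0 (?g x)) + ennreal (- r x) \<partial>M)"
      by (intro nn_integral_mono) (case_tac "B x" rule: ennreal_cases;
         auto simp: max_def ennreal_neg ennreal_plus_if intro!: ennreal_leI)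
    also have "\<dots> = Epos M ?g + (\<integral>\<^sup>+x. ennreal (- r x) \<partial>M)"
      unfolding Epos_def by (rule nn_integral_add) auto
    finally have "Epos M ?g = \<infinity>"
      using True neg_r by (auto simp: top_unique infinity_ennreal_def ennreal_add_eq_top)
    then show ?thesis
      using True neg by (cases "Eneg M ?g" rule: ennreal_cases) (auto simp: E_ext_def)
  next
    case False
    note B_real = integrable_enn2real[OF B False]
    have "E_ext M ?g = E_ext M (\<lambda>x. ereal (r x + enn2real (B x)))"
      using B_real(2) by (intro E_ext_cong_AE, eventually_elim)
        (metis enn2ereal_ennreal enn2real_nonneg plus_ereal.simps(1))
    then show ?thesis
      using r B_real(1) by (simp add: E_ext_real B_real(3)[symmetric])
  qed
qed

lemma E_ext_series:
  fixes W :: "nat \<Rightarrow> 'a \<Rightarrow> real"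
  assumes int: "\<And>m. integrable M (W m)" and nonneg: "\<And>m. AE x in M. 0 \<le> W (Suc m) x"
  shows "E_exists M (\<lambda>x. ereal (W 0 x) + (\<Sum>m. ereal (W (Suc m) x)))"
    and "E_ext M (\<lambda>x. ereal (W 0 x) + (\<Sum>m. ereal (W (Suc m) x)))
           = ereal (\<integral>x. W 0 x \<partial>M) + (\<Sum>m. ereal (\<integral>x. W (Suc m) x \<partial>M))"
proof -
  have [measurable]: "W m \<in> borel_measurable M" for m
    using int by blast
  define B where "B x = (\<Sum>m. ennreal (W (Suc m) x))" for x
  have [measurable]: "B \<in> borel_measurable M"
    unfolding B_def by measurable
  have "AE x in M. \<forall>m. 0 \<le> W (Suc m) x"
    using nonneg by (simp add: AE_all_countable)
  then have ae: "AE x in M. ereal (W 0 x) + (\<Sum>m. ereal (W (Suc m) x))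
      = ereal (W 0 x) + enn2ereal (B x)"
    unfolding B_def by eventually_elim (simp add: suminf_enn2ereal[symmetric])
  have "(\<integral>\<^sup>+x. B x \<partial>M) = (\<Sum>m. \<integral>\<^sup>+x. ennreal (W (Suc m) x) \<partial>M)"
    unfolding B_def by (rule nn_integral_suminf) simp
  also have "\<dots> = (\<Sum>m. ennreal (\<integral>x. W (Suc m) x \<partial>M))"
    using nonneg int by (simp add: nn_integral_eq_integral)
  finally have "enn2ereal (\<integral>\<^sup>+x. B x \<partial>M) = (\<Sum>m. ereal (\<integral>x. W (Suc m) x \<partial>M))"
    using nonneg by (simp add: suminf_enn2ereal[symmetric] integral_nonneg_AE)
  then show "E_exists M (\<lambda>x. ereal (W 0 x) + (\<Sum>m. ereal (W (Suc m) x)))"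
    and "E_ext M (\<lambda>x. ereal (W 0 x) + (\<Sum>m. ereal (W (Suc m) x)))
           = ereal (\<integral>x. W 0 x \<partial>M) + (\<Sum>m. ereal (\<integral>x. W (Suc m) x \<partial>M))"
    using E_ext_cong_AE[OF ae] E_ext_add_nonneg[OF int[of 0], of B] by (simp_all add: B_def)
qed

section \<open>Upper expectations\<close>

definition upper_expectation :: "'a measure \<Rightarrow> ('a \<Rightarrow> ereal) \<Rightarrow> ereal" where
  "upper_expectation M f = Inf {E_ext M h | h.
      h \<in> borel_measurable M \<and> (\<forall>x\<in>space M. f x \<le> h x) \<and> E_exists M h}"

lemma outer_exp_eq_upper_expectation:
  "space Q = TS \<Longrightarrow> outer_exp TS Q f = upper_expectation (completion Q) f"
  unfolding outer_exp_def upper_expectation_def by simp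

lemma upper_expectation_le_E_ext:
  "h \<in> borel_measurable M \<Longrightarrow> (\<And>x. x \<in> space M \<Longrightarrow> f x \<le> h x) \<Longrightarrow> E_exists M h
    \<Longrightarrow> upper_expectation M f \<le> E_ext M h"
  unfolding upper_expectation_def by (rule Inf_lower) blast

lemma upper_expectation_nonneg:
  assumes "\<And>x. x \<in> space M \<Longrightarrow> 0 \<le> f x"
  shows "0 \<le> upper_expectation M f"
  unfolding upper_expectation_def
proof (rule Inf_greatest, safe)
  fix h :: "'a \<Rightarrow> ereal" assume h: "\<forall>x\<in>space M. f x \<le> h x"
  have "e2ennreal (max 0 (- h x)) = 0" if "x \<in> space M" for x
    using order_trans[OF assms[OF that] h[rule_format, OF that]]
    by (simp add: max_def e2ennreal_neg)
  then have "Eneg M h = 0"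
    unfolding Eneg_def by (simp add: nn_integral_cong[where v="\<lambda>_. 0"])
  then show "0 \<le> E_ext M h"
    unfolding E_ext_def by (simp add: zero_ennreal.rep_eq)
qed

lemma upper_expectation_le_obtains_majorant:
  assumes "upper_expectation M f \<le> ereal c"
  obtains g where "g \<in> borel_measurable M" "\<And>x. x \<in> space M \<Longrightarrow> f x \<le> g x" "E_ext M g \<le> ereal c"
proof -
  have "\<forall>n. \<exists>h. h \<in> borel_measurable M \<and> (\<forall>x\<in>space M. f x \<le> h x)
    \<and> E_ext M h < ereal (c + 1 / Suc n)" (is "\<forall>n. ?approx n")
  proof
    fix n
    have "upper_expectation M f < ereal (c + 1 / Suc n)"
      using assms by (rule le_less_trans) simp
    then show "?approx n"
      unfolding upper_expectation_def Inf_less_iff by blast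
  qed
  from choice[OF this] obtain h
    where "\<forall>n. h n \<in> borel_measurable M \<and> (\<forall>x\<in>space M. f x \<le> h n x)
      \<and> E_ext M (h n) < ereal (c + 1 / Suc n)"
    by (elim exE)
  then have h: "\<And>n. h n \<in> borel_measurable M" "\<And>n x. x \<in> space M \<Longrightarrow> f x \<le> h n x"
    and h_lt: "\<And>n. E_ext M (h n) < ereal (c + 1 / Suc n)"
    by simp_all
  define g where "g x = (INF n. h n x)" for x
  have "g \<in> borel_measurable M"
    unfolding g_def using h(1) by measurable
  moreover have "f x \<le> g x" if "x \<in> space M" for x
    unfolding g_def using h(2)[OF that] by (rule INF_greatest)
  moreover have "E_ext M g \<le> ereal c"
  proof (rule ereal_le_epsilon2)
    fix e :: real assume "0 < e"
    then obtain n where "1 / Suc n < e"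
      using nat_approx_posE by blast
    have "E_ext M g \<le> E_ext M (h n)"
      unfolding g_def by (intro E_ext_mono INF_lower) simp
    also have "\<dots> \<le> ereal (c + e)"
      using \<open>1 / Suc n < e\<close> by (intro order.trans[OF less_imp_le[OF h_lt[of n]]]) simp
    finally show "E_ext M g \<le> ereal c + ereal e"
      by simp
  qed
  ultimately show thesis
    by (rule that)
qed

lemma (in complete_measure) borel_measurable_if_AE_eq:
  fixes f g :: "'a \<Rightarrow> real"
  assumes g: "g \<in> borel_measurable M" and ae: "AE x in M. f x = g x"
  shows "f \<in> borel_measurable M"
proof (rule borel_measurableI)
  fix S :: "real set" assume "open S"
  then have "g -` S \<inter> space M \<in> sets M"
    using g by (intro measurable_sets) auto
  moreover have "AE x in M. x \<in> g -` S \<inter> space M \<longleftrightarrow> x \<in> f -` S \<inter> space M"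
    using ae by eventually_elim auto
  ultimately show "f -` S \<inter> space M \<in> sets M"
    using in_sets_AE Int_lower2 by blast
qed

lemma (in complete_measure) integrable_if_squeezed:
  fixes f G K :: "'a \<Rightarrow> real"
  assumes G: "integrable M G" and K: "integrable M K"
    and between: "AE x in M. - K x \<le> f x \<and> f x \<le> G x"
    and int_G: "(\<integral>x. G x \<partial>M) \<le> c" and int_K: "(\<integral>x. K x \<partial>M) \<le> - c"
  shows "integrable M f" and "(\<integral>x. f x \<partial>M) = c"
proof -
  have sum_0: "(\<integral>x. G x + K x \<partial>M) = 0"
  proof (rule antisym)
    show "(\<integral>x. G x + K x \<partial>M) \<le> 0"
      using int_G int_K G K by simp
    show "0 \<le> (\<integral>x. G x + K x \<partial>M)"
      using between by (intro integral_nonneg_AE) (auto elim: eventually_mono)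
  qed
  then have "AE x in M. G x + K x = 0"
    using between G K by (subst (asm) integral_nonneg_eq_0_iff_AE) (auto elim: eventually_mono)
  with between have ae_f: "AE x in M. f x = G x"
    by eventually_elim simp
  have [measurable]: "G \<in> borel_measurable M"
    using G by blast
  have f_meas: "f \<in> borel_measurable M"
    using ae_f by (rule borel_measurable_if_AE_eq[rotated]) simp
  show "integrable M f"
    using G integrable_cong_AE[OF f_meas _ ae_f] by simp
  have "(\<integral>x. f x \<partial>M) = (\<integral>x. G x \<partial>M)"
    using f_meas ae_f by (intro integral_cong_AE) simp_all
  also have "\<dots> = c"
    using int_G int_K sum_0 G K by simp
  finally show "(\<integral>x. f x \<partial>M) = c" .
qed

lemma (in complete_measure) integrable_if_upper_expectations:
  fixes f :: "'a \<Rightarrow> real"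
  assumes upper: "upper_expectation M (\<lambda>x. ereal (f x)) \<le> ereal c"
    and lower: "upper_expectation M (\<lambda>x. - ereal (f x)) \<le> ereal (- c)"
  shows "integrable M f" and "(\<integral>x. f x \<partial>M) = c"
proof -
  obtain g where g_meas: "g \<in> borel_measurable M"
    and f_le_g: "\<And>x. x \<in> space M \<Longrightarrow> ereal (f x) \<le> g x" and E_g: "E_ext M g \<le> ereal c"
    using upper_expectation_le_obtains_majorant[OF upper] by blast
  obtain k where k_meas: "k \<in> borel_measurable M"
    and f_ge_k: "\<And>x. x \<in> space M \<Longrightarrow> - ereal (f x) \<le> k x" and E_k: "E_ext M k \<le> ereal (- c)"
    using upper_expectation_le_obtains_majorant[OF lower] by blast
  have pos_g: "Epos M g \<noteq> \<infinity>"
    using E_g by (intro Epos_ne_top) auto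
  have pos_k: "Epos M k \<noteq> \<infinity>"
    using E_k by (intro Epos_ne_top) auto
  have g_k: "- g x \<le> k x" if "x \<in> space M" for x
    using f_le_g[OF that] f_ge_k[OF that] by (metis ereal_minus_le_minus order_trans)
  have "Eneg M g \<le> Epos M k" "Eneg M k \<le> Epos M g"
    using g_k by (auto intro!: Eneg_le_Epos simp: ereal_uminus_le_reorder)
  then have neg_g: "Eneg M g \<noteq> \<infinity>" and neg_k: "Eneg M k \<noteq> \<infinity>"
    using pos_g pos_k by (auto simp: top_unique[symmetric] infinity_ennreal_def)
  note g_real = integrable_real_of_ereal[OF g_meas pos_g neg_g]
  note k_real = integrable_real_of_ereal[OF k_meas pos_k neg_k]
  have "AE x in M. - real_of_ereal (k x) \<le> f x \<and> f x \<le> real_of_ereal (g x)"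
    using g_real(2) k_real(2) AE_space
  proof eventually_elim
    case (elim x)
    then show ?case
      using f_le_g[of x] f_ge_k[of x] by (cases "g x"; cases "k x") auto
  qed
  moreover have "(\<integral>x. real_of_ereal (g x) \<partial>M) \<le> c" "(\<integral>x. real_of_ereal (k x) \<partial>M) \<le> - c"
    using E_g E_k g_real(3) k_real(3) by simp_all
  ultimately show "integrable M f" and "(\<integral>x. f x \<partial>M) = c"
    using integrable_if_squeezed[OF g_real(1) k_real(1)] by blast+
qed

section \<open>Martingale measures with finite support\<close>

lemma martingale_measureD:
  assumes "martingale_measure TS Q"
  shows "prob_space Q" and "sets Q = sets (A_meas TS)" and "space Q = TS"
    and "integrable Q (\<lambda>S. S i)"
    and "A \<in> filtr TS i \<Longrightarrow> (\<integral>S. indicator A S * S (Suc i) \<partial>Q) = (\<integral>S. indicator A S * S i \<partial>Q)"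
  using assms unfolding martingale_measure_def by auto

lemma space_M0: "Q \<in> M0 TS \<Longrightarrow> space Q = TS"
  unfolding M0_def using martingale_measureD(3) by blast

lemma measurable_coordinate:
  assumes "martingale_measure TS Q"
  shows "(\<lambda>S. S i) \<in> borel_measurable Q"
proof -
  have "(\<lambda>S::traj. S i) \<in> borel_measurable (A_meas TS)"
    unfolding A_meas_def by (intro measurable_restrict_space1 measurable_component_singleton) simp
  then show ?thesis
    using martingale_measureD(2)[OF assms] measurable_cong_sets by blast
qed

lemma node_in_sets:
  assumes "martingale_measure TS Q"
  shows "node TS S j \<in> sets Q"
proof -
  note [measurable] = measurable_coordinate[OF assms]
  have "{x\<in>space Q. \<forall>k\<le>j. x k = S k} \<in> sets Q"
    by measurable
  moreover have "node TS S j = {x\<in>space Q. \<forall>k\<le>j. x k = S k}"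
    using martingale_measureD(3)[OF assms] unfolding node_def by auto
  ultimately show ?thesis
    by simp
qed

lemma node_in_filtr: "node TS S j \<in> filtr TS j"
proof -
  let ?G = "{{S\<in>TS. S k \<in> B} | k B. k \<le> j \<and> B \<in> sets (borel :: real measure)}"
  interpret sa: sigma_algebra TS "sigma_sets TS ?G"
    by (rule sigma_algebra_sigma_sets) auto
  have "{S'\<in>TS. S' k \<in> {S k}} \<in> sigma_sets TS ?G" if "k \<in> {..j}" for k
  proof (rule sigma_sets.Basic)
    have "{S k} \<in> sets (borel :: real measure)"
      by simp
    then show "{S'\<in>TS. S' k \<in> {S k}} \<in> ?G"
      using that by blast
  qed
  then have "(\<Inter>k\<in>{..j}. {S'\<in>TS. S' k \<in> {S k}}) \<in> sigma_sets TS ?G"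
    by (intro sa.finite_INT) auto
  moreover have "node TS S j = (\<Inter>k\<in>{..j}. {S'\<in>TS. S' k \<in> {S k}})"
    unfolding node_def by auto
  ultimately show ?thesis
    unfolding filtr_def by simp
qed

lemma integral_martingale_increment:
  assumes mm: "martingale_measure TS Q" and "A \<in> filtr TS i" and "A \<in> sets Q"
  shows "integrable Q (\<lambda>S. indicator A S * (S (Suc i) - S i))"
    and "(\<integral>S. indicator A S * (S (Suc i) - S i) \<partial>Q) = 0"
proof -
  have int: "integrable Q (\<lambda>S. indicator A S * S j)" for j
    using integrable_real_mult_indicator[OF \<open>A \<in> sets Q\<close> martingale_measureD(4)[OF mm]]
    by (simp add: mult.commute)
  then show "integrable Q (\<lambda>S. indicator A S * (S (Suc i) - S i))"
    by (simp add: right_diff_distrib)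
  show "(\<integral>S. indicator A S * (S (Suc i) - S i) \<partial>Q) = 0"
    using martingale_measureD(5)[OF mm \<open>A \<in> filtr TS i\<close>] int
    by (simp add: right_diff_distrib)
qed

lemma indicator_node:
  "S \<in> TS \<Longrightarrow> indicator (node TS S' j) S = (if node TS S' j = node TS S j then 1 else 0)"
  unfolding node_def indicator_def by auto

lemma integral_nonanticipating_increment:
  assumes mm: "martingale_measure TS Q" and sub: "TS' \<subseteq> TS"
    and fin: "finite ((\<lambda>S. node TS S i) ` TS')"
    and na: "\<And>S S'. S \<in> TS \<Longrightarrow> S' \<in> TS \<Longrightarrow> (\<forall>k\<le>i. S k = S' k) \<Longrightarrow> h S = h S'"
  obtains G where "integrable Q G" and "(\<integral>S. G S \<partial>Q) = 0"
    and "\<And>S. S \<in> TS' \<Longrightarrow> G S = h S * (S (Suc i) - S i)"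
proof -
  define F where "F = (\<lambda>S. node TS S i) ` TS'"
  \<comment> \<open>By nonanticipation h is constant on each time-i node, so any representative gives its value.\<close>
  define hold where "hold Nd = h (SOME S. S \<in> Nd \<inter> TS')" for Nd
  define G where "G S = (\<Sum>Nd\<in>F. hold Nd * (indicator Nd S * (S (Suc i) - S i)))" for S
  have F_sets: "Nd \<in> sets Q" "Nd \<in> filtr TS i" if "Nd \<in> F" for Nd
    using that node_in_sets[OF mm] node_in_filtr unfolding F_def by auto
  note increment = integral_martingale_increment[OF mm F_sets(2,1)]
  have "integrable Q G"
    unfolding G_def
    by (auto intro!: Bochner_Integration.integrable_sum integrable_mult_right increment(1))
  moreover have "(\<integral>S. G S \<partial>Q) = 0"
    unfolding G_def using increment by (simp add: integrable_mult_right)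
  moreover have "G S = h S * (S (Suc i) - S i)" if S: "S \<in> TS'" for S
  proof -
    let ?N = "node TS S i"
    have "S \<in> TS"
      using S sub by blast
    have "G S = (\<Sum>Nd\<in>F. if Nd = ?N then hold Nd * (S (Suc i) - S i) else 0)"
      unfolding G_def F_def using \<open>S \<in> TS\<close> sub
      by (intro sum.cong refl) (auto simp: indicator_node split: if_splits)
    also have "\<dots> = hold ?N * (S (Suc i) - S i)"
      using S fin unfolding F_def by simp
    also have "hold ?N = h S"
    proof -
      have "\<exists>S'. S' \<in> ?N \<inter> TS'"
        using S \<open>S \<in> TS\<close> unfolding node_def by blast
      then have "(SOME S'. S' \<in> ?N \<inter> TS') \<in> ?N"
        by (metis (mono_tags, lifting) IntD1 someI_ex)
      then show ?thesis
        unfolding hold_def node_def using \<open>S \<in> TS\<close> by (auto intro: na)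
    qed
    finally show ?thesis .
  qed
  ultimately show thesis
    by (rule that)
qed

section \<open>Superhedging and the upper expectation\<close>

lemma integrable_eq_wealth_inf:
  assumes mm: "martingale_measure TS Q" and sub: "TS' \<subseteq> TS"
    and fin: "\<And>j. finite ((\<lambda>S. node TS S j) ` TS')"
    and na: "nonanticipating TS n H"
  obtains W where "integrable Q W" and "(\<integral>S. W S \<partial>Q) = V"
    and "\<And>S. S \<in> TS' \<Longrightarrow> W S = wealth_inf V n H S"
proof -
  have "\<exists>G. integrable Q G \<and> (\<integral>S. G S \<partial>Q) = 0 \<and> (\<forall>S\<in>TS'. G S = H i S * (S (Suc i) - S i))"
    if "i < n" for i
    using integral_nonanticipating_increment[OF mm sub fin, of i "H i"] na that
    unfolding nonanticipating_def by (metis (no_types, lifting))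
  then obtain G where G: "\<And>i. i < n \<Longrightarrow> integrable Q (G i)" "\<And>i. i < n \<Longrightarrow> (\<integral>S. G i S \<partial>Q) = 0"
    "\<And>i S. i < n \<Longrightarrow> S \<in> TS' \<Longrightarrow> G i S = H i S * (S (Suc i) - S i)"
    by metis
  interpret prob_space Q
    using mm by (rule martingale_measureD(1))
  define W where "W S = V + (\<Sum>i<n. G i S)" for S
  have "integrable Q W"
    unfolding W_def using G(1)
    by (auto intro!: Bochner_Integration.integrable_add Bochner_Integration.integrable_sum)
  moreover have "(\<integral>S. W S \<partial>Q) = V"
  proof -
    have "(\<integral>S. W S \<partial>Q) = V + (\<Sum>i<n. \<integral>S. G i S \<partial>Q)"
      unfolding W_def using G(1)
      by (subst Bochner_Integration.integral_add)
        (auto simp: prob_space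
          intro!: Bochner_Integration.integrable_sum Bochner_Integration.integral_sum)
    also have "(\<Sum>i<n. \<integral>S. G i S \<partial>Q) = 0"
      using G(2) by simp
    finally show ?thesis
      by simp
  qed
  moreover have "W S = wealth_inf V n H S" if "S \<in> TS'" for S
    unfolding W_def wealth_inf_def wealth_def using G(3) that by simp
  ultimately show thesis
    by (rule that)
qed

lemma superhedges_obtains_majorant:
  assumes Q: "Q \<in> M0 TS" and gp: "gen_portfolio TS V N H" and sh: "superhedges TS V N H f"
  obtains h where "h \<in> borel_measurable Q" and "\<And>S. S \<in> TS \<Longrightarrow> f S \<le> h S"
    and "E_exists Q h" and "E_ext Q h = endowment V"
proof -
  have mm: "martingale_measure TS Q"
    using Q unfolding M0_def by simp
  interpret prob_space Q
    using mm by (rule martingale_measureD(1))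
  obtain TS' where TS': "TS' \<in> sets Q" "emeasure Q TS' = 1"
    and fin: "\<And>j. finite ((\<lambda>S. node TS S j) ` TS')"
    using Q unfolding M0_def finite_support_def by blast
  have sub: "TS' \<subseteq> TS"
    using sets.sets_into_space[OF TS'(1)] martingale_measureD(3)[OF mm] by simp
  have "\<exists>W. integrable Q W \<and> (\<integral>S. W S \<partial>Q) = V m
      \<and> (\<forall>S\<in>TS'. W S = wealth_inf (V m) (N m) (H m) S)" for m
    using integrable_eq_wealth_inf[OF mm sub fin, of "N m" "H m" "V m"] gp
    unfolding gen_portfolio_def simple_portfolio_def by metis
  then obtain W where W_int: "\<And>m. integrable Q (W m)" and W_V: "\<And>m. (\<integral>S. W m S \<partial>Q) = V m"
    and W_wealth: "\<And>m S. S \<in> TS' \<Longrightarrow> W m S = wealth_inf (V m) (N m) (H m) S"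
    by metis
  have W_nonneg: "0 \<le> W (Suc m) S" if "S \<in> TS'" for m S
    using gp sub that unfolding gen_portfolio_def positive_sp_def by (auto simp: W_wealth)
  have ae_TS': "AE S in Q. S \<in> TS'"
    using TS' by (intro AE_prob_1) (simp add: measure_def)
  then have W_ae_nonneg: "AE S in Q. 0 \<le> W (Suc m) S" for m
    by eventually_elim (rule W_nonneg)
  have [measurable]: "W m \<in> borel_measurable Q" for m
    using W_int by blast
  define series where "series S = ereal (W 0 S) + (\<Sum>m. ereal (W (Suc m) S))" for S
  \<comment> \<open>Outside TS', where W need not match the wealth, h is \<open>\<infinity>\<close>; so it majorizes f everywhere.\<close>
  define h where "h S = (if S \<in> TS' then series S else \<infinity>)" for S
  have "h \<in> borel_measurable Q"
    unfolding h_def series_def using TS'(1) by measurable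
  moreover have "f S \<le> h S" if "S \<in> TS" for S
    using sh that unfolding superhedges_def h_def series_def gp_value_def by (simp add: W_wealth)
  moreover have "AE S in Q. h S = series S"
    using ae_TS' by eventually_elim (simp add: h_def)
  moreover have "E_exists Q series" and "E_ext Q series = endowment V"
    using E_ext_series[of Q W, OF W_int W_ae_nonneg]
    unfolding series_def endowment_def W_V by simp_all
  ultimately show thesis
    using that E_ext_cong_AE by metis
qed

lemma outer_exp_le_sigma_bar:
  assumes Q: "Q \<in> M0 TS"
  shows "outer_exp TS Q f \<le> sigma_bar TS f"
  unfolding sigma_bar_def
proof (rule Inf_greatest, safe)
  fix V N H assume "gen_portfolio TS V N H" "superhedges TS V N H f"
  then obtain h where "h \<in> borel_measurable Q" "\<And>S. S \<in> TS \<Longrightarrow> f S \<le> h S"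
    and "E_exists Q h" "E_ext Q h = endowment V"
    using superhedges_obtains_majorant[OF Q] by metis
  then show "outer_exp TS Q f \<le> endowment V"
    unfolding outer_exp_eq_upper_expectation[OF space_M0[OF Q]]
    using upper_expectation_le_E_ext[of h "completion Q" f]
    by (simp add: space_M0[OF Q] measurable_completion E_ext_completion E_exists_completion)
qed

lemma sigma_bar_le_normK: "sigma_bar TS f \<le> normK TS f"
  unfolding normK_def I_bar_def sigma_bar_def
proof (rule Inf_superset_mono, safe)
  fix V N H assume "pos_gen_portfolio TS V N H" "superhedges TS V N H (\<lambda>S. \<bar>f S\<bar>)"
  moreover have "f S \<le> \<bar>f S\<bar>" for S
    by (cases "f S") auto
  ultimately have "gen_portfolio TS V N H" "superhedges TS V N H f"
    unfolding pos_gen_portfolio_def superhedges_def by (auto intro: order_trans)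
  then show "\<exists>V' N' H'. endowment V = endowment V'
      \<and> gen_portfolio TS V' N' H' \<and> superhedges TS V' N' H' f"
    by blast
qed

lemma L1K_integrable_completion:
  assumes Q: "Q \<in> M0 TS" and f: "f \<in> L1K TS"
  shows "integrable (completion Q) f" and "intK TS f = ereal (\<integral>S. f S \<partial>completion Q)"
proof -
  obtain c where c: "sigma_bar TS (\<lambda>S. ereal (f S)) = ereal c"
    and c': "sigma_bar TS (\<lambda>S. - ereal (f S)) = ereal (- c)"
    using f unfolding L1K_def
    by (cases "sigma_bar TS (\<lambda>S. ereal (f S))") (auto simp: ereal_uminus_eq_reorder)
  have upper: "upper_expectation (completion Q) (\<lambda>S. ereal (f S)) \<le> ereal c"
    using outer_exp_le_sigma_bar[OF Q, of "\<lambda>S. ereal (f S)"]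
    unfolding c outer_exp_eq_upper_expectation[OF space_M0[OF Q]] .
  have lower: "upper_expectation (completion Q) (\<lambda>S. - ereal (f S)) \<le> ereal (- c)"
    using outer_exp_le_sigma_bar[OF Q, of "\<lambda>S. - ereal (f S)"]
    unfolding c' outer_exp_eq_upper_expectation[OF space_M0[OF Q]] .
  note completion.integrable_if_upper_expectations[OF upper lower]
  then show "integrable (completion Q) f" and "intK TS f = ereal (\<integral>S. f S \<partial>completion Q)"
    unfolding intK_def c by simp_all
qed

theorem theorem6p2:
  fixes s0 :: real and TS :: "traj set"
  assumes traj: "\<forall>S\<in>TS. S 0 = s0"
    and nonempty: "M0 TS \<noteq> {}"
  shows "sigma_bar TS (\<lambda>_. 0) \<ge> 0
    \<and> (\<forall>f :: traj \<Rightarrow> ereal.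
          (SUP Q\<in>M0 TS. outer_exp TS Q f) \<le> sigma_bar TS f \<and> sigma_bar TS f \<le> normK TS f)
    \<and> (\<forall>Q\<in>M0 TS. \<forall>f\<in>L1K TS.
          integrable (completion Q) f \<and> intK TS f = ereal (\<integral>S. f S \<partial>completion Q))"
proof -
  obtain Q where Q: "Q \<in> M0 TS"
    using nonempty by blast
  have "0 \<le> outer_exp TS Q (\<lambda>_. 0)"
    unfolding outer_exp_eq_upper_expectation[OF space_M0[OF Q]]
    by (rule upper_expectation_nonneg) simp
  then have "sigma_bar TS (\<lambda>_. 0) \<ge> 0"
    using outer_exp_le_sigma_bar[OF Q] by (rule order_trans)
  moreover have "(SUP Q\<in>M0 TS. outer_exp TS Q f) \<le> sigma_bar TS f" for f
    by (rule SUP_least) (rule outer_exp_le_sigma_bar)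
  ultimately show ?thesis
    using sigma_bar_le_normK L1K_integrable_completion by blast
qed

end
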